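(* Let $m\ge0$ be an integer and let $\tau_1,\dots,\tau_T$ be nonnegative integers with $\tau_t\le m$ and $t+\tau_t\le T$ for all $t$. Then $\widetilde\tau_s\le2m$ for all $s=1,\dots,T$.
   Context: In each period $t\in\{1,\dots,T\}$ a claim is generated and is observed at time $t+\tau_t$. Define $N(t)=\#\{i\in\{1,\dots,t-1\}: i+\tau_i<t\}$, the number of claims observed by the end of period $t-1$. For $s=1,\dots,T$, let $\rho(s)$ be the time at which the $s$-th claim (claims ordered by observation time, ties broken arbitrarily) is observed, and set $\widetilde\tau_s=s-1-N(\rho(s))$. *)

theory Defs
  imports Main
begin

text \<open>Claim t (1 \<le> t \<le> T) is generated in period t and observed at time t + tau t.\<close>

definition num_observed :: "(nat \<Rightarrow> nat) \<Rightarrow> nat \<Rightarrow> nat" where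
  "num_observed tau t = card {i \<in> {1..<t}. i + tau i < t}"

text \<open>rho(s): observation time of the s-th claim when claims are ordered by
  observation time, i.e. the s-th smallest element (1-based) of the multiset of
  observation times t + tau t, t = 1..T (independent of tie breaking).\<close>
definition obs_time :: "(nat \<Rightarrow> nat) \<Rightarrow> nat \<Rightarrow> nat \<Rightarrow> nat" where
  "obs_time tau T s = sort (map (\<lambda>t. t + tau t) [1..<T+1]) ! (s - 1)"

definition tilde_tau :: "(nat \<Rightarrow> nat) \<Rightarrow> nat \<Rightarrow> nat \<Rightarrow> int" where
  "tilde_tau tau T s = int s - 1 - int (num_observed tau (obs_time tau T s))"

end

theory Submission
  imports Defs
begin

text \<open>The s-th observation happens at a time r = rho(s) \<ge> s, because only claims generated
  up to time r can be observed by time r. Every claim generated before r - m is observed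
  before r, so N(r) \<ge> r - 1 - m. Hence tilde tau_s = s - 1 - N(r) \<le> m, which is even
  stronger than the claimed bound 2m.\<close>

lemma length_filter_le_sort_nth:
  fixes xs :: "'a::linorder list"
  assumes "k < length xs"
  shows "Suc k \<le> length (filter (\<lambda>y. y \<le> sort xs ! k) xs)"
proof -
  let ?ys = "sort xs" and ?P = "\<lambda>y. y \<le> sort xs ! k"
  have "\<forall>y\<in>set (take (Suc k) ?ys). ?P y"
    using assms by (auto simp: in_set_conv_nth sorted_nth_mono)
  then have "Suc k = length (filter ?P (take (Suc k) ?ys))"
    using assms by (simp add: filter_True)
  also have "\<dots> \<le> length (filter ?P ?ys)"
    by (metis append_take_drop_id filter_append length_append le_add1)
  also have "\<dots> = length (filter ?P xs)"
    by (simp only: filter_sort length_sort)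
  finally show ?thesis .
qed

lemma obs_time_mem:
  fixes tau :: "nat \<Rightarrow> nat"
  assumes "s \<in> {1..T}"
  shows "obs_time tau T s \<in> (\<lambda>t. t + tau t) ` {1..T}"
proof -
  have "obs_time tau T s \<in> set (sort (map (\<lambda>t. t + tau t) [1..<T+1]))"
    using assms unfolding obs_time_def by (intro nth_mem) auto
  then show ?thesis by auto
qed

lemma obs_time_ge:
  fixes tau :: "nat \<Rightarrow> nat"
  assumes "s \<in> {1..T}"
  shows "s \<le> obs_time tau T s"
proof -
  let ?f = "\<lambda>t. t + tau t" and ?r = "obs_time tau T s"
  have "Suc (s - 1) \<le> length (filter (\<lambda>y. y \<le> ?r) (map ?f [1..<T+1]))"
    unfolding obs_time_def using assms by (intro length_filter_le_sort_nth) auto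
  then have "s \<le> length (filter (\<lambda>y. y \<le> ?r) (map ?f [1..<T+1]))"
    using assms by (simp only: atLeastAtMost_iff Suc_pred')
  also have "\<dots> = card {t \<in> {1..<T+1}. ?f t \<le> ?r}"
    by (simp del: upt_Suc add: filter_map o_def distinct_card[symmetric])
  also have "\<dots> \<le> card {1..?r}"
    by (rule card_mono) auto
  finally show ?thesis by simp
qed

lemma num_observed_ge:
  assumes "\<forall>i\<in>{1..<r}. tau i \<le> m"
  shows "r - 1 - m \<le> num_observed tau r"
proof -
  have "{1..r - 1 - m} \<subseteq> {i \<in> {1..<r}. i + tau i < r}"
  proof
    fix i assume i: "i \<in> {1..r - 1 - m}"
    then have "tau i \<le> m" using assms by auto
    with i show "i \<in> {i \<in> {1..<r}. i + tau i < r}" by auto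
  qed
  then have "card {1..r - 1 - m} \<le> num_observed tau r"
    unfolding num_observed_def by (intro card_mono) auto
  then show ?thesis by simp
qed

lemma tilde_tau_le:
  assumes "\<forall>t\<in>{1..T}. tau t \<le> m"
      and "\<forall>t\<in>{1..T}. t + tau t \<le> T"
      and "s \<in> {1..T}"
  shows "tilde_tau tau T s \<le> int m"
proof -
  define r where "r = obs_time tau T s"
  have "r \<le> T"
    using obs_time_mem[of s T tau] assms(3) assms(2) unfolding r_def by auto
  then have "r - 1 - m \<le> num_observed tau r"
    using assms(1) by (intro num_observed_ge) auto
  moreover have "s \<le> r"
    unfolding r_def using assms(3) by (rule obs_time_ge)
  ultimately show ?thesis
    unfolding tilde_tau_def r_def[symmetric] by linarith
qed

theorem lemma9:
  fixes tau :: "nat \<Rightarrow> nat" and T m :: nat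
  assumes "\<forall>t\<in>{1..T}. tau t \<le> m"
      and "\<forall>t\<in>{1..T}. t + tau t \<le> T"
  shows "\<forall>s\<in>{1..T}. tilde_tau tau T s \<le> 2 * int m"
  using tilde_tau_le[OF assms] by force

end
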